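(* Suppose $\|f\|_\infty\le C$ for some $C\ge1$ and there are $\sigma,\Gamma>0$ with $\mathbb{E}[|\varepsilon|^k\mid\mathbf{X}]\le\frac{k!}{2}\sigma^2\Gamma^{k-2}$ a.s. for all integers $k\ge2$. Let $w=16C(\Gamma\vee 2C)$ and $C_{n,\lambda}=\frac{\lambda}{n}\frac{8(C^2+\sigma^2)}{1-w\lambda/n}$. Then for every parameter $\theta\in\mathbb{R}^P$ and every $\lambda\in[0,n/w)$, \[ \max\Big\{\mathbb{E}\big[e^{\lambda(\mathcal{E}(\theta)-\mathcal{E}_n(\theta))}\big],\ \mathbb{E}\big[e^{\lambda(\mathcal{E}_n(\theta)-\mathcal{E}(\theta))}\big]\Big\}\le \exp\big(C_{n,\lambda}\lambda\mathcal{E}(\theta)\big). \]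
   Context: Data: $(\mathbf{X}_i,Y_i)_{i=1,\dots,n}$ i.i.d. copies of $(\mathbf{X},Y)\in\mathbb{R}^p\times\mathbb{R}$, $Y=f(\mathbf{X})+\varepsilon$, $\mathbb{E}[\varepsilon\mid\mathbf{X}]=0$ a.s. $R(g)=\mathbb{E}[(Y-g(\mathbf{X}))^2]$, $R_n(g)=\frac1n\sum_i(Y_i-g(\mathbf{X}_i))^2$. Networks: ReLU $\sigma(x)=\max(x,0)$; $g_\theta(\mathbf{x})=W^{(L+1)}\mathbf{x}^{(L)}+v^{(L+1)}$, $\mathbf{x}^{(0)}=\mathbf{x}\in\mathbb{R}^p$, $\mathbf{x}^{(l)}=\sigma(W^{(l)}\mathbf{x}^{(l-1)}+v^{(l)})$, $l=1,\dots,L$, width $r$, parameters $\theta\in\mathbb{R}^P$; clipped network $f_\theta=(-C)\vee(g_\theta\wedge C)$. $\mathcal{E}(\theta)=R(f_\theta)-R(f)$ and $\mathcal{E}_n(\theta)=R_n(f_\theta)-R_n(f)$. *)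

theory Defs
  imports "HOL-Probability.Probability"
begin

definition relu :: "real \<Rightarrow> real" where
  "relu t = max t 0"

text \<open>Hidden layers of a ReLU network of width r with input in real^'p.
  Parameters: W1 i j = entry (i,j) of W^(1); W l i j = entry (i,j) of W^(l) for l \<ge> 2;
  v l i = i-th entry of the bias v^(l). Layer l output is x^(l) (entries i < r relevant).\<close>
fun relu_hidden :: "(nat \<Rightarrow> 'p::finite \<Rightarrow> real) \<Rightarrow> (nat \<Rightarrow> nat \<Rightarrow> nat \<Rightarrow> real) \<Rightarrow>
    (nat \<Rightarrow> nat \<Rightarrow> real) \<Rightarrow> nat \<Rightarrow> nat \<Rightarrow> real^'p \<Rightarrow> nat \<Rightarrow> real" where
  "relu_hidden W1 W v r 0 x = (\<lambda>i. 0)"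
| "relu_hidden W1 W v r (Suc 0) x =
     (\<lambda>i. relu ((\<Sum>j\<in>UNIV. W1 i j * x $ j) + v 1 i))"
| "relu_hidden W1 W v r (Suc (Suc l)) x =
     (\<lambda>i. relu ((\<Sum>j<r. W (Suc (Suc l)) i j * relu_hidden W1 W v r (Suc l) x j)
                  + v (Suc (Suc l)) i))"

definition relu_net :: "nat \<Rightarrow> nat \<Rightarrow> (nat \<Rightarrow> 'p::finite \<Rightarrow> real) \<Rightarrow> (nat \<Rightarrow> nat \<Rightarrow> nat \<Rightarrow> real) \<Rightarrow>
    (nat \<Rightarrow> nat \<Rightarrow> real) \<Rightarrow> real^'p \<Rightarrow> real" where
  "relu_net L r W1 W v x =
     (if L = 0 then (\<Sum>j\<in>UNIV. W1 0 j * x $ j) + v 1 0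
      else (\<Sum>j<r. W (Suc L) 0 j * relu_hidden W1 W v r L x j) + v (Suc L) 0)"

definition clip :: "real \<Rightarrow> real \<Rightarrow> real" where
  "clip C t = max (- C) (min t C)"

definition clipped_net where
  "clipped_net C L r W1 W v x = clip C (relu_net L r W1 W v x)"

definition risk :: "'a measure \<Rightarrow> ('a \<Rightarrow> 'b) \<Rightarrow> ('a \<Rightarrow> real) \<Rightarrow> ('b \<Rightarrow> real) \<Rightarrow> real" where
  "risk M X Y g = (\<integral>\<omega>. (Y \<omega> - g (X \<omega>))^2 \<partial>M)"

definition emp_risk :: "nat \<Rightarrow> (nat \<Rightarrow> 'a \<Rightarrow> 'b) \<Rightarrow> (nat \<Rightarrow> 'a \<Rightarrow> real) \<Rightarrow> ('b \<Rightarrow> real) \<Rightarrow> 'a \<Rightarrow> real" where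
  "emp_risk n Xs Ys g \<omega> = (1 / real n) * (\<Sum>i<n. (Ys i \<omega> - g (Xs i \<omega>))^2)"

end

(*
  Write Z = (Y - f_theta(X))^2 - (Y - f(X))^2 for the excess loss of one observation. With
  G = f(X) - f_theta(X) and the noise e = Y - f(X) it is Z = G^2 + 2 e G, where |G| <= 2C.
  Since E[e | X] = 0, the cross term has mean zero, so E Z = E G^2 = E(theta). Conditioning on X,
  the moment bound on e turns |Z|^k <= G^2 (A_k + B_k |e|^k) into Bernstein's condition
  E |Z|^k <= k! * 8 (C^2 + sigma^2) E(theta) * w^(k-2). Summing the exponential series termwise
  then gives E exp(u (Z - E Z)) <= exp(8 (C^2 + sigma^2) E(theta) u^2 / (1 - |u| w)) for |u| w < 1,
  and independence of the sample makes the moment generating function of the empirical mean the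
  n-th power of this bound at u = +-lambda/n.
*)

theory Submission
  imports Defs
begin

section \<open>Clipped ReLU networks\<close>

lemma relu_hidden_measurable: "(\<lambda>x. relu_hidden W1 W v r l x i) \<in> borel_measurable borel"
proof (induction l arbitrary: i)
  case (Suc l)
  show ?case
  proof (cases l)
    case 0
    then show ?thesis by (simp add: relu_def; measurable)
  next
    case (Suc l')
    then show ?thesis using Suc.IH by (simp add: relu_def; measurable)
  qed
qed simp

lemma clipped_net_measurable: "clipped_net C L r W1 W v \<in> borel_measurable borel"
  unfolding clipped_net_def clip_def relu_net_def
  using relu_hidden_measurable by measurable

lemma abs_clipped_net_le: "0 \<le> C \<Longrightarrow> \<bar>clipped_net C L r W1 W v x\<bar> \<le> C"
  unfolding clipped_net_def clip_def by auto

section \<open>Bernstein's moment condition\<close>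

lemma power_add_le_two_power:
  fixes a b :: real
  assumes "0 \<le> a" "0 \<le> b"
  shows "(a + b) ^ Suc k \<le> 2 ^ k * (a ^ Suc k + b ^ Suc k)"
proof (induction k)
  case 0
  then show ?case by simp
next
  case (Suc k)
  have "0 \<le> (a - b) * (a ^ Suc k - b ^ Suc k)"
    using assms power_mono[of a b "Suc k"] power_mono[of b a "Suc k"]
    by (cases "a \<le> b") (auto intro: mult_nonpos_nonpos)
  then have chebyshev: "(a + b) * (a ^ Suc k + b ^ Suc k) \<le> 2 * (a ^ Suc (Suc k) + b ^ Suc (Suc k))"
    by (simp add: algebra_simps)
  have "(a + b) ^ Suc (Suc k) \<le> (a + b) * (2 ^ k * (a ^ Suc k + b ^ Suc k))"
    using Suc assms by (simp add: mult_left_mono)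
  also have "\<dots> \<le> 2 ^ k * (2 * (a ^ Suc (Suc k) + b ^ Suc (Suc k)))"
    using chebyshev by (simp add: mult.left_commute)
  finally show ?case by (simp add: field_simps)
qed

lemma abs_square_plus_cross_power_le:
  fixes a c b :: real
  assumes "\<bar>a\<bar> \<le> b"
  shows "\<bar>a\<^sup>2 + 2 * c * a\<bar> ^ (j + 2)
    \<le> a\<^sup>2 * (2 ^ (j + 1) * b ^ (2 * j + 2) + 2 ^ (2 * j + 3) * b ^ j * \<bar>c\<bar> ^ (j + 2))"
proof -
  have "\<bar>a\<^sup>2 + 2 * c * a\<bar> = \<bar>a\<bar> * \<bar>a + 2 * c\<bar>"
    by (simp add: power2_eq_square algebra_simps flip: abs_mult)
  also have "\<dots> \<le> \<bar>a\<bar> * (\<bar>a\<bar> + 2 * \<bar>c\<bar>)"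
    using abs_triangle_ineq[of a "2 * c"] by (intro mult_left_mono) auto
  finally have "\<bar>a\<^sup>2 + 2 * c * a\<bar> ^ (j + 2) \<le> (\<bar>a\<bar> * (\<bar>a\<bar> + 2 * \<bar>c\<bar>)) ^ (j + 2)"
    by (intro power_mono) auto
  also have "\<dots> = \<bar>a\<bar> ^ (j + 2) * (\<bar>a\<bar> + 2 * \<bar>c\<bar>) ^ Suc (j + 1)"
    by (simp add: power_mult_distrib)
  also have "\<dots> \<le> \<bar>a\<bar> ^ (j + 2) * (2 ^ (j + 1) * (\<bar>a\<bar> ^ (j + 2) + 2 ^ (j + 2) * \<bar>c\<bar> ^ (j + 2)))"
    using power_add_le_two_power[of "\<bar>a\<bar>" "2 * \<bar>c\<bar>" "j + 1"]
    by (intro mult_left_mono) (simp_all only: power_mult_distrib Suc_eq_plus1 add.assoc one_add_one abs_ge_zero zero_le_power)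
  also have "\<dots> = a\<^sup>2 * \<bar>a\<bar> ^ j * (2 ^ (j + 1) * (\<bar>a\<bar> ^ (j + 2) + 2 ^ (j + 2) * \<bar>c\<bar> ^ (j + 2)))"
    by (simp add: power_add power2_eq_square)
  also have "\<dots> \<le> a\<^sup>2 * b ^ j * (2 ^ (j + 1) * (b ^ (j + 2) + 2 ^ (j + 2) * \<bar>c\<bar> ^ (j + 2)))"
    using assms by (intro mult_mono mult_left_mono power_mono add_right_mono) auto
  also have "\<dots> = a\<^sup>2 * (2 ^ (j + 1) * (b ^ j * b ^ (j + 2)) + 2 ^ (j + 1) * 2 ^ (j + 2) * b ^ j * \<bar>c\<bar> ^ (j + 2))"
    by (simp add: algebra_simps)
  also have "\<dots> = a\<^sup>2 * (2 ^ (j + 1) * b ^ (2 * j + 2) + 2 ^ (2 * j + 3) * b ^ j * \<bar>c\<bar> ^ (j + 2))"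
  proof -
    have "2 * j + 2 = j + (j + 2)" "2 * j + 3 = (j + 1) + (j + 2)"
      by simp_all
    then have "b ^ j * b ^ (j + 2) = b ^ (2 * j + 2)" "(2::real) ^ (j + 1) * 2 ^ (j + 2) = 2 ^ (2 * j + 3)"
      by (simp_all only: power_add)
    then show ?thesis
      by (simp only:)
  qed
  finally show ?thesis .
qed

lemma bernstein_constants_le:
  fixes b \<sigma> \<Gamma> :: real
  assumes "0 \<le> b" "0 \<le> \<Gamma>"
  shows "2 ^ (j + 1) * b ^ (2 * j + 2) + 2 ^ (2 * j + 3) * b ^ j * (fact (j + 2) / 2 * \<sigma>\<^sup>2 * \<Gamma> ^ j)
    \<le> fact (j + 2) * (2 * b\<^sup>2 + 4 * \<sigma>\<^sup>2) * (8 * b * max \<Gamma> b) ^ j"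
proof -
  define w where "w = 8 * b * max \<Gamma> b"
  have "2 * b\<^sup>2 \<le> 8 * b * b" "4 * b * \<Gamma> \<le> 8 * b * \<Gamma>"
    using assms by (auto simp: power2_eq_square)
  moreover have "8 * b * b \<le> w" "8 * b * \<Gamma> \<le> w"
    unfolding w_def using assms by (auto intro: mult_left_mono)
  ultimately have "2 * b\<^sup>2 \<le> w" "4 * b * \<Gamma> \<le> w"
    by linarith+
  moreover have "0 \<le> 2 * b\<^sup>2" "0 \<le> 4 * b * \<Gamma>"
    using assms by simp_all
  ultimately have pow_le: "(2 * b\<^sup>2) ^ j \<le> w ^ j" "(4 * b * \<Gamma>) ^ j \<le> w ^ j"
    by (metis power_mono)+
  have "2 * b\<^sup>2 \<le> fact (j + 2) * (2 * b\<^sup>2)"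
    using mult_right_mono[OF fact_ge_1[of "j + 2"], of "2 * b\<^sup>2"] by simp
  then have "2 * b\<^sup>2 * (2 * b\<^sup>2) ^ j \<le> fact (j + 2) * (2 * b\<^sup>2) * w ^ j"
    using pow_le(1) by (rule mult_mono) simp_all
  moreover have "fact (j + 2) * (4 * \<sigma>\<^sup>2) * (4 * b * \<Gamma>) ^ j \<le> fact (j + 2) * (4 * \<sigma>\<^sup>2) * w ^ j"
    using pow_le(2) by (rule mult_left_mono) simp
  ultimately have sum_le: "2 * b\<^sup>2 * (2 * b\<^sup>2) ^ j + fact (j + 2) * (4 * \<sigma>\<^sup>2) * (4 * b * \<Gamma>) ^ j
      \<le> fact (j + 2) * (2 * b\<^sup>2 + 4 * \<sigma>\<^sup>2) * w ^ j"
    unfolding distrib_left distrib_right by (rule add_mono)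
  have eq1: "2 ^ (j + 1) * b ^ (2 * j + 2) = 2 * b\<^sup>2 * (2 * b\<^sup>2) ^ j"
    by (simp add: power_add power_mult power_mult_distrib power2_eq_square)
  have eq2: "2 ^ (2 * j + 3) * b ^ j * (fact (j + 2) / 2 * \<sigma>\<^sup>2 * \<Gamma> ^ j)
      = fact (j + 2) * (4 * \<sigma>\<^sup>2) * (4 * b * \<Gamma>) ^ j"
    by (simp add: power_add power_mult power_mult_distrib)
  show ?thesis
    unfolding eq1 eq2 using sum_le unfolding w_def .
qed

lemma summable_exp_tail_abs:
  fixes x :: real
  shows "summable (\<lambda>j. \<bar>x\<bar> ^ (j + 2) / fact (j + 2))"
  using summable_ignore_initial_segment[OF summable_exp[of "\<bar>x\<bar>"], of 2]
  by (simp add: field_simps)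

lemma exp_le_one_plus_exp_tail_abs:
  fixes x :: real
  shows "exp x \<le> 1 + x + (\<Sum>j. \<bar>x\<bar> ^ (j + 2) / fact (j + 2))"
proof -
  have exp_sums: "(\<lambda>n. x ^ n / fact n) sums exp x"
    using exp_converges[of x] by (simp add: divide_inverse mult.commute scaleR_conv_of_real)
  have tail: "summable (\<lambda>j. x ^ (j + 2) / fact (j + 2))"
    using summable_ignore_initial_segment[OF sums_summable[OF exp_sums], of 2] by simp
  have "exp x = (\<Sum>j. x ^ (j + 2) / fact (j + 2)) + (\<Sum>n<2. x ^ n / fact n)"
    using suminf_split_initial_segment[OF sums_summable[OF exp_sums], of 2] exp_sums
    by (simp add: sums_iff)
  also have "(\<Sum>n<2. x ^ n / fact n) = 1 + x"
    by (simp add: numeral_2_eq_2)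
  also have "(\<Sum>j. x ^ (j + 2) / fact (j + 2)) \<le> (\<Sum>j. \<bar>x\<bar> ^ (j + 2) / fact (j + 2))"
    by (rule suminf_le[OF _ tail summable_exp_tail_abs], rule divide_right_mono)
       (metis abs_ge_self power_abs, simp)
  finally show ?thesis
    by simp
qed

lemma nn_integral_exp_tail_le:
  fixes Z :: "'a \<Rightarrow> real"
  assumes [measurable]: "Z \<in> borel_measurable M"
    and moments: "\<And>j. (\<integral>\<^sup>+\<omega>. ennreal (\<bar>Z \<omega>\<bar> ^ (j + 2)) \<partial>M) \<le> ennreal (fact (j + 2) * v * w ^ j)"
    and "0 \<le> v" "0 \<le> w" "\<bar>u\<bar> * w < 1"
  shows "(\<integral>\<^sup>+\<omega>. ennreal (\<Sum>j. \<bar>u * Z \<omega>\<bar> ^ (j + 2) / fact (j + 2)) \<partial>M)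
    \<le> ennreal (v * u\<^sup>2 / (1 - \<bar>u\<bar> * w))"
proof -
  define c where "c j = \<bar>u\<bar> ^ (j + 2) / fact (j + 2)" for j
  have c_nonneg: "0 \<le> c j" for j
    by (simp add: c_def)
  have term_le: "ennreal (c j) * (\<integral>\<^sup>+\<omega>. ennreal (\<bar>Z \<omega>\<bar> ^ (j + 2)) \<partial>M)
      \<le> ennreal (v * u\<^sup>2 * (\<bar>u\<bar> * w) ^ j)" for j
  proof -
    have "ennreal (c j) * (\<integral>\<^sup>+\<omega>. ennreal (\<bar>Z \<omega>\<bar> ^ (j + 2)) \<partial>M)
        \<le> ennreal (c j) * ennreal (fact (j + 2) * v * w ^ j)"
      by (rule mult_left_mono[OF moments]) simp
    also have "\<dots> = ennreal (c j * (fact (j + 2) * v * w ^ j))"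
      by (rule ennreal_mult[symmetric, OF c_nonneg]) (simp add: assms)
    also have "c j * (fact (j + 2) * v * w ^ j) = v * u\<^sup>2 * (\<bar>u\<bar> * w) ^ j"
      by (simp add: c_def power_add power_mult_distrib power2_eq_square)
    finally show ?thesis .
  qed
  have "(\<integral>\<^sup>+\<omega>. ennreal (\<Sum>j. \<bar>u * Z \<omega>\<bar> ^ (j + 2) / fact (j + 2)) \<partial>M)
      = (\<integral>\<^sup>+\<omega>. (\<Sum>j. ennreal (c j) * ennreal (\<bar>Z \<omega>\<bar> ^ (j + 2))) \<partial>M)"
  proof -
    have "ennreal (c j) * ennreal (\<bar>Z \<omega>\<bar> ^ (j + 2)) = ennreal (\<bar>u * Z \<omega>\<bar> ^ (j + 2) / fact (j + 2))"
      for j \<omega>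
      by (simp add: c_def abs_mult power_mult_distrib flip: ennreal_mult)
    moreover have "ennreal (\<Sum>j. \<bar>u * Z \<omega>\<bar> ^ (j + 2) / fact (j + 2))
        = (\<Sum>j. ennreal (\<bar>u * Z \<omega>\<bar> ^ (j + 2) / fact (j + 2)))" for \<omega>
      by (rule suminf_ennreal2[symmetric, OF _ summable_exp_tail_abs]) simp
    ultimately show ?thesis
      by simp
  qed
  also have "\<dots> = (\<Sum>j. ennreal (c j) * (\<integral>\<^sup>+\<omega>. ennreal (\<bar>Z \<omega>\<bar> ^ (j + 2)) \<partial>M))"
    by (simp add: nn_integral_suminf nn_integral_cmult)
  also have "\<dots> \<le> (\<Sum>j. ennreal (v * u\<^sup>2 * (\<bar>u\<bar> * w) ^ j))"
    by (intro suminf_le term_le summableI)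
  also have "\<dots> = ennreal (v * u\<^sup>2 / (1 - \<bar>u\<bar> * w))"
  proof -
    have "(\<lambda>j. v * u\<^sup>2 * (\<bar>u\<bar> * w) ^ j) sums (v * u\<^sup>2 * (1 / (1 - \<bar>u\<bar> * w)))"
      using assms(4,5) by (intro sums_mult geometric_sums) simp
    then show ?thesis
      using assms(3,4) by (subst suminf_ennreal2) (auto simp: sums_iff)
  qed
  finally show ?thesis .
qed

lemma (in prob_space) bernstein_mgf_le:
  fixes Z :: "'a \<Rightarrow> real"
  assumes Z: "integrable M Z" "expectation Z = m"
    and moments: "\<And>j. (\<integral>\<^sup>+\<omega>. ennreal (\<bar>Z \<omega>\<bar> ^ (j + 2)) \<partial>M) \<le> ennreal (fact (j + 2) * v * w ^ j)"
    and "0 \<le> v" "0 \<le> w" "\<bar>u\<bar> * w < 1"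
  shows "(\<integral>\<^sup>+\<omega>. ennreal (exp (u * (Z \<omega> - m))) \<partial>M) \<le> ennreal (exp (v * u\<^sup>2 / (1 - \<bar>u\<bar> * w)))"
proof -
  define D where "D = v * u\<^sup>2 / (1 - \<bar>u\<bar> * w)"
  define R where "R \<omega> = (\<Sum>j. \<bar>u * Z \<omega>\<bar> ^ (j + 2) / fact (j + 2))" for \<omega>
  have Z_meas [measurable]: "Z \<in> borel_measurable M"
    using Z(1) by blast
  have R_meas [measurable]: "R \<in> borel_measurable M"
    unfolding R_def by measurable
  have R_nonneg: "0 \<le> R \<omega>" for \<omega>
    unfolding R_def by (rule suminf_nonneg[OF summable_exp_tail_abs]) simp
  have R_le: "(\<integral>\<^sup>+\<omega>. ennreal (R \<omega>) \<partial>M) \<le> ennreal D"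
    unfolding R_def D_def using Z_meas moments assms(4-6) by (rule nn_integral_exp_tail_le)
  have R_int: "integrable M R"
    using R_le R_nonneg
    by (intro integrableI_nonneg) (auto simp: R_def top.not_eq_extremum ennreal_less_top intro: le_less_trans)
  have "0 \<le> D"
    using assms(4-6) by (simp add: D_def)
  then have "expectation R \<le> D"
    using R_le R_nonneg nn_integral_eq_integral[OF R_int] by simp
  have pointwise: "exp (u * (Z \<omega> - m)) \<le> exp (- u * m) * (1 + u * Z \<omega> + R \<omega>)" for \<omega>
  proof -
    have "exp (u * (Z \<omega> - m)) = exp (- u * m) * exp (u * Z \<omega>)"
      by (simp add: algebra_simps flip: exp_add)
    also have "\<dots> \<le> exp (- u * m) * (1 + u * Z \<omega> + R \<omega>)"
      unfolding R_def by (intro mult_left_mono exp_le_one_plus_exp_tail_abs) simp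
    finally show ?thesis .
  qed
  have H_nonneg: "0 \<le> exp (- u * m) * (1 + u * Z \<omega> + R \<omega>)" for \<omega>
    by (rule order_trans[OF less_imp_le[OF exp_gt_zero] pointwise])
  have "(\<integral>\<^sup>+\<omega>. ennreal (exp (u * (Z \<omega> - m))) \<partial>M)
      \<le> (\<integral>\<^sup>+\<omega>. ennreal (exp (- u * m) * (1 + u * Z \<omega> + R \<omega>)) \<partial>M)"
    using pointwise by (intro nn_integral_mono ennreal_leI)
  also have "\<dots> = ennreal (exp (- u * m) * (1 + u * m + expectation R))"
    using H_nonneg Z R_int by (simp add: nn_integral_eq_integral prob_space)
  also have "\<dots> \<le> ennreal (exp (- u * m) * exp (u * m + D))"
  proof (intro ennreal_leI mult_left_mono)
    show "1 + u * m + expectation R \<le> exp (u * m + D)"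
      using \<open>expectation R \<le> D\<close> exp_ge_add_one_self[of "u * m + D"] by linarith
  qed simp
  also have "\<dots> = ennreal (exp D)"
    by (simp flip: exp_add)
  finally show ?thesis
    unfolding D_def .
qed

lemma (in sigma_finite_subalgebra) nn_integral_mult_le_of_cond_exp_le:
  assumes [measurable]: "G \<in> borel_measurable F" "h \<in> borel_measurable M"
    and cond_le: "AE \<omega> in M. nn_cond_exp M F h \<omega> \<le> c"
  shows "(\<integral>\<^sup>+\<omega>. G \<omega> * h \<omega> \<partial>M) \<le> c * (\<integral>\<^sup>+\<omega>. G \<omega> \<partial>M)"
proof -
  have G_M [measurable]: "G \<in> borel_measurable M"
    by (rule measurable_from_subalg[OF subalg]) measurable
  have "(\<integral>\<^sup>+\<omega>. G \<omega> * h \<omega> \<partial>M) = (\<integral>\<^sup>+\<omega>. G \<omega> * nn_cond_exp M F h \<omega> \<partial>M)"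
    by (rule nn_cond_exp_intg[symmetric]) measurable
  also have "\<dots> \<le> (\<integral>\<^sup>+\<omega>. G \<omega> * c \<partial>M)"
    using cond_le by (intro nn_integral_mono_AE) (auto elim!: eventually_mono intro: mult_left_mono)
  also have "\<dots> = c * (\<integral>\<^sup>+\<omega>. G \<omega> \<partial>M)"
    by (simp add: mult.commute nn_integral_cmult[OF G_M])
  finally show ?thesis .
qed

lemma (in sigma_finite_subalgebra) cross_term_moment_le:
  fixes G \<epsilon> :: "'a \<Rightarrow> real"
  assumes [measurable]: "G \<in> borel_measurable F" "\<epsilon> \<in> borel_measurable M"
    and G_le: "\<And>\<omega>. \<bar>G \<omega>\<bar> \<le> b" and "0 \<le> \<Gamma>"
    and cond_moment: "AE \<omega> in M. nn_cond_exp M F (\<lambda>\<omega>. ennreal (\<bar>\<epsilon> \<omega>\<bar> ^ (j + 2))) \<omega>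
      \<le> ennreal (fact (j + 2) / 2 * \<sigma>\<^sup>2 * \<Gamma> ^ j)"
  shows "(\<integral>\<^sup>+\<omega>. ennreal (\<bar>(G \<omega>)\<^sup>2 + 2 * \<epsilon> \<omega> * G \<omega>\<bar> ^ (j + 2)) \<partial>M)
    \<le> ennreal (fact (j + 2) * (2 * b\<^sup>2 + 4 * \<sigma>\<^sup>2) * (8 * b * max \<Gamma> b) ^ j)
      * (\<integral>\<^sup>+\<omega>. ennreal ((G \<omega>)\<^sup>2) \<partial>M)"
proof -
  define A where "A = (2::real) ^ (j + 1) * b ^ (2 * j + 2)"
  define B where "B = (2::real) ^ (2 * j + 3) * b ^ j"
  define m where "m = fact (j + 2) / 2 * \<sigma>\<^sup>2 * \<Gamma> ^ j"
  have [measurable]: "G \<in> borel_measurable M"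
    by (rule measurable_from_subalg[OF subalg]) measurable
  have "0 \<le> b"
    using G_le abs_ge_zero order_trans by blast
  then have nonneg: "0 \<le> A" "0 \<le> B" "0 \<le> m"
    using \<open>0 \<le> \<Gamma>\<close> by (simp_all add: A_def B_def m_def)
  have ennreal_split: "ennreal (A * x + B * (x * y)) = ennreal A * ennreal x + ennreal B * (ennreal x * ennreal y)"
    if "0 \<le> x" "0 \<le> y" for x y
    using nonneg that by (simp add: ennreal_mult ennreal_plus)
  have pointwise: "ennreal (\<bar>(G \<omega>)\<^sup>2 + 2 * \<epsilon> \<omega> * G \<omega>\<bar> ^ (j + 2))
      \<le> ennreal A * ennreal ((G \<omega>)\<^sup>2) + ennreal B * (ennreal ((G \<omega>)\<^sup>2) * ennreal (\<bar>\<epsilon> \<omega>\<bar> ^ (j + 2)))"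
    for \<omega>
  proof -
    have "\<bar>(G \<omega>)\<^sup>2 + 2 * \<epsilon> \<omega> * G \<omega>\<bar> ^ (j + 2)
        \<le> (G \<omega>)\<^sup>2 * (A + B * \<bar>\<epsilon> \<omega>\<bar> ^ (j + 2))"
      unfolding A_def B_def by (rule abs_square_plus_cross_power_le[OF G_le])
    also have "\<dots> = A * (G \<omega>)\<^sup>2 + B * ((G \<omega>)\<^sup>2 * \<bar>\<epsilon> \<omega>\<bar> ^ (j + 2))"
      by (simp add: algebra_simps)
    finally have "ennreal (\<bar>(G \<omega>)\<^sup>2 + 2 * \<epsilon> \<omega> * G \<omega>\<bar> ^ (j + 2))
        \<le> ennreal (A * (G \<omega>)\<^sup>2 + B * ((G \<omega>)\<^sup>2 * \<bar>\<epsilon> \<omega>\<bar> ^ (j + 2)))"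
      by (rule ennreal_leI)
    also have "\<dots> = ennreal A * ennreal ((G \<omega>)\<^sup>2)
        + ennreal B * (ennreal ((G \<omega>)\<^sup>2) * ennreal (\<bar>\<epsilon> \<omega>\<bar> ^ (j + 2)))"
      by (rule ennreal_split) simp_all
    finally show ?thesis .
  qed
  have "(\<integral>\<^sup>+\<omega>. ennreal (\<bar>(G \<omega>)\<^sup>2 + 2 * \<epsilon> \<omega> * G \<omega>\<bar> ^ (j + 2)) \<partial>M)
      \<le> (\<integral>\<^sup>+\<omega>. ennreal A * ennreal ((G \<omega>)\<^sup>2)
           + ennreal B * (ennreal ((G \<omega>)\<^sup>2) * ennreal (\<bar>\<epsilon> \<omega>\<bar> ^ (j + 2))) \<partial>M)"
    using pointwise by (rule nn_integral_mono)
  also have "\<dots> = ennreal A * (\<integral>\<^sup>+\<omega>. ennreal ((G \<omega>)\<^sup>2) \<partial>M)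
      + ennreal B * (\<integral>\<^sup>+\<omega>. ennreal ((G \<omega>)\<^sup>2) * ennreal (\<bar>\<epsilon> \<omega>\<bar> ^ (j + 2)) \<partial>M)"
    by (simp add: nn_integral_add nn_integral_cmult)
  also have "\<dots> \<le> ennreal A * (\<integral>\<^sup>+\<omega>. ennreal ((G \<omega>)\<^sup>2) \<partial>M)
      + ennreal B * (ennreal m * (\<integral>\<^sup>+\<omega>. ennreal ((G \<omega>)\<^sup>2) \<partial>M))"
    using cond_moment unfolding m_def
    by (intro add_left_mono mult_left_mono nn_integral_mult_le_of_cond_exp_le) auto
  also have "\<dots> = ennreal (A + B * m) * (\<integral>\<^sup>+\<omega>. ennreal ((G \<omega>)\<^sup>2) \<partial>M)"
    using nonneg by (simp add: distrib_right ennreal_mult mult.assoc)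
  also have "\<dots> \<le> ennreal (fact (j + 2) * (2 * b\<^sup>2 + 4 * \<sigma>\<^sup>2) * (8 * b * max \<Gamma> b) ^ j)
      * (\<integral>\<^sup>+\<omega>. ennreal ((G \<omega>)\<^sup>2) \<partial>M)"
    using bernstein_constants_le[OF \<open>0 \<le> b\<close> \<open>0 \<le> \<Gamma>\<close>, of j \<sigma>]
    by (intro mult_right_mono ennreal_leI) (simp_all add: A_def B_def m_def)
  finally show ?thesis .
qed

section \<open>Independent identically distributed samples\<close>

lemma (in prob_space) nn_integral_prod_iid:
  assumes "finite I" and indep: "indep_vars (\<lambda>_. N) V I"
    and dist: "\<And>i. i \<in> I \<Longrightarrow> distr M N (V i) = distr M N V0"
    and [measurable]: "V0 \<in> M \<rightarrow>\<^sub>M N" "h \<in> borel_measurable N"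
  shows "(\<integral>\<^sup>+\<omega>. (\<Prod>i\<in>I. h (V i \<omega>)) \<partial>M) = (\<integral>\<^sup>+\<omega>. h (V0 \<omega>) \<partial>M) ^ card I"
proof -
  have "(\<integral>\<^sup>+\<omega>. h (V i \<omega>) \<partial>M) = (\<integral>\<^sup>+\<omega>. h (V0 \<omega>) \<partial>M)" if "i \<in> I" for i
  proof -
    have [measurable]: "V i \<in> M \<rightarrow>\<^sub>M N"
      using indep that by (auto simp: indep_vars_def)
    have "(\<integral>\<^sup>+\<omega>. h (V i \<omega>) \<partial>M) = (\<integral>\<^sup>+x. h x \<partial>distr M N (V i))"
      by (simp add: nn_integral_distr)
    also have "\<dots> = (\<integral>\<^sup>+\<omega>. h (V0 \<omega>) \<partial>M)"
      using that by (simp add: dist nn_integral_distr)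
    finally show ?thesis .
  qed
  moreover have "indep_vars (\<lambda>_. borel) (\<lambda>i \<omega>. h (V i \<omega>)) I"
    using indep_vars_compose2[OF indep, of "\<lambda>_. h"] by simp
  ultimately show ?thesis
    using \<open>finite I\<close> by (simp add: indep_vars_nn_integral)
qed

lemma (in prob_space) iid_mean_mgf_le:
  fixes n :: nat
  assumes indep: "indep_vars (\<lambda>_. N) V {..<n}"
    and dist: "\<And>i. i < n \<Longrightarrow> distr M N (V i) = distr M N V0"
    and [measurable]: "V0 \<in> M \<rightarrow>\<^sub>M N" "\<phi> \<in> borel_measurable N" and "0 < n"
    and mgf: "(\<integral>\<^sup>+\<omega>. ennreal (exp (u / real n * (\<phi> (V0 \<omega>) - m))) \<partial>M) \<le> ennreal (exp d)"
  shows "(\<integral>\<^sup>+\<omega>. ennreal (exp (u * (1 / real n * (\<Sum>i<n. \<phi> (V i \<omega>)) - m))) \<partial>M) \<le> ennreal (exp (real n * d))"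
proof -
  have "exp (u * (1 / real n * (\<Sum>i<n. \<phi> (V i \<omega>)) - m)) = (\<Prod>i<n. exp (u / real n * (\<phi> (V i \<omega>) - m)))"
    for \<omega>
  proof -
    have "u * (1 / real n * (\<Sum>i<n. \<phi> (V i \<omega>)) - m) = u / real n * ((\<Sum>i<n. \<phi> (V i \<omega>)) - real n * m)"
      using \<open>0 < n\<close> by (simp add: field_simps)
    also have "\<dots> = (\<Sum>i<n. u / real n * (\<phi> (V i \<omega>) - m))"
      by (simp only: sum_distrib_left[symmetric] sum_subtractf sum_constant) simp
    finally show ?thesis
      by (simp only: exp_sum finite_lessThan)
  qed
  then have "(\<integral>\<^sup>+\<omega>. ennreal (exp (u * (1 / real n * (\<Sum>i<n. \<phi> (V i \<omega>)) - m))) \<partial>M)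
      = (\<integral>\<^sup>+\<omega>. (\<Prod>i<n. ennreal (exp (u / real n * (\<phi> (V i \<omega>) - m)))) \<partial>M)"
    by (simp add: prod_ennreal)
  also have "\<dots> = (\<integral>\<^sup>+\<omega>. ennreal (exp (u / real n * (\<phi> (V0 \<omega>) - m))) \<partial>M) ^ n"
    using nn_integral_prod_iid[OF _ indep, of V0 "\<lambda>x. ennreal (exp (u / real n * (\<phi> x - m)))"] dist
    by simp
  also have "\<dots> \<le> ennreal (exp d) ^ n"
    using mgf by (rule power_mono) simp
  also have "\<dots> = ennreal (exp (real n * d))"
    by (simp add: ennreal_power exp_of_nat_mult)
  finally show ?thesis .
qed

section \<open>The regression model\<close>

definition excess_loss :: "('b \<Rightarrow> real) \<Rightarrow> ('b \<Rightarrow> real) \<Rightarrow> 'b \<times> real \<Rightarrow> real" where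
  "excess_loss g f p = (snd p - g (fst p))\<^sup>2 - (snd p - f (fst p))\<^sup>2"

lemma excess_loss_measurable:
  fixes g f :: "'b::second_countable_topology \<Rightarrow> real"
  assumes [measurable]: "g \<in> borel_measurable borel" "f \<in> borel_measurable borel"
  shows "excess_loss g f \<in> borel_measurable borel"
  unfolding excess_loss_def by (subst borel_prod[symmetric]) measurable

lemma excess_loss_eq_cross_term:
  "excess_loss g f (x, y) = (f x - g x)\<^sup>2 + 2 * (y - f x) * (f x - g x)"
  by (simp add: excess_loss_def power2_eq_square algebra_simps)

lemma emp_risk_diff_eq:
  "emp_risk n Xs Ys g \<omega> - emp_risk n Xs Ys f \<omega> = 1 / real n * (\<Sum>i<n. excess_loss g f (Xs i \<omega>, Ys i \<omega>))"
  unfolding emp_risk_def excess_loss_def by (simp add: sum_subtractf right_diff_distrib)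

locale bernstein_regression = prob_space M for M :: "'a measure" +
  fixes X :: "'a \<Rightarrow> 'b::second_countable_topology" and Y :: "'a \<Rightarrow> real" and f :: "'b \<Rightarrow> real"
    and C \<sigma> \<Gamma> :: real
  assumes X_measurable [measurable]: "X \<in> borel_measurable M"
    and Y_measurable [measurable]: "Y \<in> borel_measurable M"
    and f_measurable [measurable]: "f \<in> borel_measurable borel"
    and abs_f_le: "\<And>x. \<bar>f x\<bar> \<le> C"
    and \<Gamma>_nonneg: "0 \<le> \<Gamma>"
    and integrable_noise: "integrable M (\<lambda>\<omega>. Y \<omega> - f (X \<omega>))"
    and cond_exp_noise: "AE \<omega> in M.
      real_cond_exp M (vimage_algebra (space M) X borel) (\<lambda>\<omega>. Y \<omega> - f (X \<omega>)) \<omega> = 0"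
    and cond_moments_noise: "\<And>k::nat. k \<ge> 2 \<Longrightarrow> AE \<omega> in M.
      nn_cond_exp M (vimage_algebra (space M) X borel) (\<lambda>\<omega>. ennreal (\<bar>Y \<omega> - f (X \<omega>)\<bar> ^ k)) \<omega>
      \<le> ennreal (fact k / 2 * \<sigma>\<^sup>2 * \<Gamma> ^ (k - 2))"
begin

sublocale cond: finite_measure_subalgebra M "vimage_algebra (space M) X borel"
proof
  show "subalgebra M (vimage_algebra (space M) X borel)"
    unfolding subalgebra_def
  proof
    show "sets (vimage_algebra (space M) X borel) \<subseteq> sets M"
      using sets_vimage_algebra2[of X "space M" borel] measurable_sets[OF X_measurable] by auto
  qed simp
qed

lemma measurable_comp_X:
  "h \<in> borel_measurable borel \<Longrightarrow> (\<lambda>\<omega>. h (X \<omega>)) \<in> borel_measurable (vimage_algebra (space M) X borel)"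
  using measurable_compose[OF measurable_vimage_algebra1[of X "space M" borel]] by simp

lemma integrable_noise_square: "integrable M (\<lambda>\<omega>. (Y \<omega> - f (X \<omega>))\<^sup>2)"
proof (rule integrableI_nonneg)
  have "(\<integral>\<^sup>+\<omega>. 1 * ennreal (\<bar>Y \<omega> - f (X \<omega>)\<bar> ^ 2) \<partial>M) \<le> ennreal (\<sigma>\<^sup>2) * (\<integral>\<^sup>+\<omega>. 1 \<partial>M)"
    using cond_moments_noise[of 2] by (intro cond.nn_integral_mult_le_of_cond_exp_le) auto
  then have "(\<integral>\<^sup>+\<omega>. ennreal ((Y \<omega> - f (X \<omega>))\<^sup>2) \<partial>M) \<le> ennreal (\<sigma>\<^sup>2)"
    by (simp add: emeasure_space_1)
  then show "(\<integral>\<^sup>+\<omega>. ennreal ((Y \<omega> - f (X \<omega>))\<^sup>2) \<partial>M) < \<infinity>"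
    unfolding infinity_ennreal_def by (rule le_less_trans[OF _ ennreal_less_top])
qed auto

lemma integral_mult_noise_eq_0:
  assumes [measurable]: "h \<in> borel_measurable borel" and h_le: "\<And>x. \<bar>h x\<bar> \<le> B"
  shows "integrable M (\<lambda>\<omega>. h (X \<omega>) * (Y \<omega> - f (X \<omega>)))"
    and "(\<integral>\<omega>. h (X \<omega>) * (Y \<omega> - f (X \<omega>)) \<partial>M) = 0"
proof -
  have "0 \<le> B"
    using h_le abs_ge_zero order_trans by blast
  show int: "integrable M (\<lambda>\<omega>. h (X \<omega>) * (Y \<omega> - f (X \<omega>)))"
  proof (rule Bochner_Integration.integrable_bound)
    show "integrable M (\<lambda>\<omega>. B * (Y \<omega> - f (X \<omega>)))"
      using integrable_noise by simp
    show "AE \<omega> in M. norm (h (X \<omega>) * (Y \<omega> - f (X \<omega>))) \<le> norm (B * (Y \<omega> - f (X \<omega>)))"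
      using \<open>0 \<le> B\<close> by (simp add: abs_mult mult_right_mono h_le)
  qed measurable
  have "(\<integral>\<omega>. h (X \<omega>) * (Y \<omega> - f (X \<omega>)) \<partial>M)
      = (\<integral>\<omega>. h (X \<omega>) * real_cond_exp M (vimage_algebra (space M) X borel) (\<lambda>\<omega>. Y \<omega> - f (X \<omega>)) \<omega> \<partial>M)"
    by (rule cond.real_cond_exp_intg(2)[symmetric, OF int measurable_comp_X[OF assms(1)]]) measurable
  also have "\<dots> = 0"
    using cond_exp_noise by (intro integral_eq_zero_AE) auto
  finally show "(\<integral>\<omega>. h (X \<omega>) * (Y \<omega> - f (X \<omega>)) \<partial>M) = 0" .
qed

lemma C_nonneg: "0 \<le> C"
  using abs_f_le abs_ge_zero order_trans by blast

lemma abs_f_minus_le: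
  assumes "\<And>x. \<bar>g x\<bar> \<le> C"
  shows "\<bar>f x - g x\<bar> \<le> 2 * C"
  using abs_triangle_ineq4[of "f x" "g x"] abs_f_le[of x] assms[of x] by linarith

lemma integrable_diff_square:
  assumes [measurable]: "g \<in> borel_measurable borel" and g_le: "\<And>x. \<bar>g x\<bar> \<le> C"
  shows "integrable M (\<lambda>\<omega>. (f (X \<omega>) - g (X \<omega>))\<^sup>2)"
proof (rule integrable_const_bound[where B="(2 * C)\<^sup>2"])
  show "AE \<omega> in M. norm ((f (X \<omega>) - g (X \<omega>))\<^sup>2) \<le> (2 * C)\<^sup>2"
  proof
    fix \<omega>
    have "\<bar>f (X \<omega>) - g (X \<omega>)\<bar> \<le> 2 * C"
      using g_le by (rule abs_f_minus_le)
    from power_mono[OF this abs_ge_zero, of 2]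
    show "norm ((f (X \<omega>) - g (X \<omega>))\<^sup>2) \<le> (2 * C)\<^sup>2"
      by simp
  qed
qed measurable

lemma excess_risk_eq:
  assumes [measurable]: "g \<in> borel_measurable borel" and g_le: "\<And>x. \<bar>g x\<bar> \<le> C"
  shows "integrable M (\<lambda>\<omega>. excess_loss g f (X \<omega>, Y \<omega>))"
    and "expectation (\<lambda>\<omega>. excess_loss g f (X \<omega>, Y \<omega>)) = risk M X Y g - risk M X Y f"
    and "risk M X Y g - risk M X Y f = expectation (\<lambda>\<omega>. (f (X \<omega>) - g (X \<omega>))\<^sup>2)"
proof -
  note int_sq = integrable_diff_square[OF assms]
  have [measurable]: "(\<lambda>x. f x - g x) \<in> borel_measurable borel"
    by measurable
  moreover have "\<bar>f x - g x\<bar> \<le> 2 * C" for x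
    using g_le by (rule abs_f_minus_le)
  ultimately have cross: "integrable M (\<lambda>\<omega>. (f (X \<omega>) - g (X \<omega>)) * (Y \<omega> - f (X \<omega>)))"
      "(\<integral>\<omega>. (f (X \<omega>) - g (X \<omega>)) * (Y \<omega> - f (X \<omega>)) \<partial>M) = 0"
    by (rule integral_mult_noise_eq_0)+
  have loss_eq: "excess_loss g f (X \<omega>, Y \<omega>)
      = (f (X \<omega>) - g (X \<omega>))\<^sup>2 + 2 * ((f (X \<omega>) - g (X \<omega>)) * (Y \<omega> - f (X \<omega>)))" for \<omega>
    by (simp add: excess_loss_eq_cross_term)
  show int_loss: "integrable M (\<lambda>\<omega>. excess_loss g f (X \<omega>, Y \<omega>))"
    unfolding loss_eq using int_sq cross(1) by simp
  have "risk M X Y g = (\<integral>\<omega>. (Y \<omega> - f (X \<omega>))\<^sup>2 + excess_loss g f (X \<omega>, Y \<omega>) \<partial>M)"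
    unfolding risk_def by (simp add: excess_loss_def)
  also have "\<dots> = risk M X Y f + expectation (\<lambda>\<omega>. excess_loss g f (X \<omega>, Y \<omega>))"
    unfolding risk_def using integrable_noise_square int_loss by simp
  finally show "expectation (\<lambda>\<omega>. excess_loss g f (X \<omega>, Y \<omega>)) = risk M X Y g - risk M X Y f"
    by simp
  then show "risk M X Y g - risk M X Y f = expectation (\<lambda>\<omega>. (f (X \<omega>) - g (X \<omega>))\<^sup>2)"
    unfolding loss_eq using int_sq cross by simp
qed

lemma excess_loss_moment_le:
  assumes [measurable]: "g \<in> borel_measurable borel" and g_le: "\<And>x. \<bar>g x\<bar> \<le> C"
  shows "(\<integral>\<^sup>+\<omega>. ennreal (\<bar>excess_loss g f (X \<omega>, Y \<omega>)\<bar> ^ (j + 2)) \<partial>M)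
    \<le> ennreal (fact (j + 2) * (8 * (C\<^sup>2 + \<sigma>\<^sup>2) * (risk M X Y g - risk M X Y f))
        * (16 * C * max \<Gamma> (2 * C)) ^ j)"
proof -
  define E where "E = risk M X Y g - risk M X Y f"
  define w where "w = 16 * C * max \<Gamma> (2 * C)"
  have diff_le: "\<bar>f (X \<omega>) - g (X \<omega>)\<bar> \<le> 2 * C" for \<omega>
    using g_le by (rule abs_f_minus_le)
  have E_eq: "(\<integral>\<^sup>+\<omega>. ennreal ((f (X \<omega>) - g (X \<omega>))\<^sup>2) \<partial>M) = ennreal E"
    unfolding E_def excess_risk_eq(3)[OF assms]
    by (rule nn_integral_eq_integral[OF integrable_diff_square[OF assms]]) simp
  have "0 \<le> E"
    unfolding E_def excess_risk_eq(3)[OF assms] by simp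
  have "(\<integral>\<^sup>+\<omega>. ennreal (\<bar>excess_loss g f (X \<omega>, Y \<omega>)\<bar> ^ (j + 2)) \<partial>M)
      \<le> ennreal (fact (j + 2) * (2 * (2 * C)\<^sup>2 + 4 * \<sigma>\<^sup>2) * (8 * (2 * C) * max \<Gamma> (2 * C)) ^ j)
        * (\<integral>\<^sup>+\<omega>. ennreal ((f (X \<omega>) - g (X \<omega>))\<^sup>2) \<partial>M)"
  proof -
    have "(\<lambda>x. f x - g x) \<in> borel_measurable borel"
      by measurable
    then have "(\<lambda>\<omega>. f (X \<omega>) - g (X \<omega>)) \<in> borel_measurable (vimage_algebra (space M) X borel)"
      by (rule measurable_comp_X)
    moreover have "(\<lambda>\<omega>. Y \<omega> - f (X \<omega>)) \<in> borel_measurable M"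
      by measurable
    moreover have "AE \<omega> in M. nn_cond_exp M (vimage_algebra (space M) X borel)
        (\<lambda>\<omega>. ennreal (\<bar>Y \<omega> - f (X \<omega>)\<bar> ^ (j + 2))) \<omega> \<le> ennreal (fact (j + 2) / 2 * \<sigma>\<^sup>2 * \<Gamma> ^ j)"
      using cond_moments_noise[of "j + 2"] by simp
    ultimately show ?thesis
      unfolding excess_loss_eq_cross_term
      by (rule cond.cross_term_moment_le[where G="\<lambda>\<omega>. f (X \<omega>) - g (X \<omega>)"
            and \<epsilon>="\<lambda>\<omega>. Y \<omega> - f (X \<omega>)" and b="2 * C", OF _ _ diff_le \<Gamma>_nonneg])
  qed
  also have "\<dots> = ennreal (fact (j + 2) * (8 * C\<^sup>2 + 4 * \<sigma>\<^sup>2) * w ^ j * E)"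
    using \<open>0 \<le> E\<close> C_nonneg
    by (simp add: E_eq w_def ennreal_mult power_mult_distrib mult_ac)
  also have "\<dots> \<le> ennreal (fact (j + 2) * (8 * (C\<^sup>2 + \<sigma>\<^sup>2) * E) * w ^ j)"
    using \<open>0 \<le> E\<close> C_nonneg \<Gamma>_nonneg
    by (intro ennreal_leI) (simp add: w_def mult_right_mono mult_left_mono algebra_simps)
  finally show ?thesis
    unfolding E_def w_def .
qed

lemma excess_loss_mgf_le:
  assumes [measurable]: "g \<in> borel_measurable borel" and g_le: "\<And>x. \<bar>g x\<bar> \<le> C"
    and u: "\<bar>u\<bar> * (16 * C * max \<Gamma> (2 * C)) < 1"
  shows "(\<integral>\<^sup>+\<omega>. ennreal (exp (u * (excess_loss g f (X \<omega>, Y \<omega>) - (risk M X Y g - risk M X Y f)))) \<partial>M)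
    \<le> ennreal (exp (8 * (C\<^sup>2 + \<sigma>\<^sup>2) * (risk M X Y g - risk M X Y f) * u\<^sup>2
        / (1 - \<bar>u\<bar> * (16 * C * max \<Gamma> (2 * C)))))"
proof (rule bernstein_mgf_le[OF excess_risk_eq(1,2)[OF assms(1,2)] excess_loss_moment_le[OF assms(1,2)] _ _ u])
  show "0 \<le> 8 * (C\<^sup>2 + \<sigma>\<^sup>2) * (risk M X Y g - risk M X Y f)"
    unfolding excess_risk_eq(3)[OF assms(1,2)] by simp
  show "0 \<le> 16 * C * max \<Gamma> (2 * C)"
    using C_nonneg by simp
qed

lemma emp_excess_risk_mgf_le:
  fixes Xs :: "nat \<Rightarrow> 'a \<Rightarrow> 'b" and Ys :: "nat \<Rightarrow> 'a \<Rightarrow> real" and n :: nat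
  assumes indep: "indep_vars (\<lambda>_. borel) (\<lambda>i \<omega>. (Xs i \<omega>, Ys i \<omega>)) {..<n}"
    and dist: "\<And>i. i < n \<Longrightarrow> distr M borel (\<lambda>\<omega>. (Xs i \<omega>, Ys i \<omega>)) = distr M borel (\<lambda>\<omega>. (X \<omega>, Y \<omega>))"
    and [measurable]: "g \<in> borel_measurable borel" and g_le: "\<And>x. \<bar>g x\<bar> \<le> C"
    and t: "\<bar>t\<bar> * (16 * C * max \<Gamma> (2 * C)) < real n"
  shows "(\<integral>\<^sup>+\<omega>. ennreal (exp (t * ((emp_risk n Xs Ys g \<omega> - emp_risk n Xs Ys f \<omega>)
        - (risk M X Y g - risk M X Y f)))) \<partial>M)
    \<le> ennreal (exp (\<bar>t\<bar> / real n * (8 * (C\<^sup>2 + \<sigma>\<^sup>2) / (1 - 16 * C * max \<Gamma> (2 * C) * \<bar>t\<bar> / real n))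
        * \<bar>t\<bar> * (risk M X Y g - risk M X Y f)))"
proof -
  define w where "w = 16 * C * max \<Gamma> (2 * C)"
  define E where "E = risk M X Y g - risk M X Y f"
  have "0 \<le> \<bar>t\<bar> * (16 * C * max \<Gamma> (2 * C))"
    using C_nonneg \<Gamma>_nonneg by simp
  then have "0 < real n"
    using t by linarith
  then have "0 < n"
    by simp
  have abs_scaled: "\<bar>t / real n\<bar> = \<bar>t\<bar> / real n"
    by simp
  then have scaled_lt: "\<bar>t / real n\<bar> * w < 1"
    using t \<open>0 < n\<close> by (simp add: w_def field_simps)
  have square_scaled: "(t / real n)\<^sup>2 = (\<bar>t\<bar> / real n)\<^sup>2"
    using abs_scaled by (metis power2_abs)
  have "real n * (8 * (C\<^sup>2 + \<sigma>\<^sup>2) * E * (a / real n)\<^sup>2 / (1 - a / real n * w))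
      = a / real n * (8 * (C\<^sup>2 + \<sigma>\<^sup>2) / (1 - w * a / real n)) * a * E" if "a * w < real n" for a
    using that \<open>0 < n\<close> by (simp add: power2_eq_square field_simps)
  then have "real n * (8 * (C\<^sup>2 + \<sigma>\<^sup>2) * E * (t / real n)\<^sup>2 / (1 - \<bar>t / real n\<bar> * w))
      = \<bar>t\<bar> / real n * (8 * (C\<^sup>2 + \<sigma>\<^sup>2) / (1 - w * \<bar>t\<bar> / real n)) * \<bar>t\<bar> * E"
    unfolding abs_scaled square_scaled using t by (simp only: w_def)
  moreover have "(\<lambda>\<omega>. (X \<omega>, Y \<omega>)) \<in> M \<rightarrow>\<^sub>M borel"
    by (simp add: borel_measurable_Pair)
  ultimately show ?thesis
    using iid_mean_mgf_le[OF indep dist _ excess_loss_measurable[OF assms(3) f_measurable] \<open>0 < n\<close>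
        excess_loss_mgf_le[OF assms(3) g_le scaled_lt[unfolded w_def]]]
    by (simp add: emp_risk_diff_eq E_def w_def)
qed

end

theorem lemma4p2:
  fixes M :: "'a measure"
    and X :: "'a \<Rightarrow> real^'p::finite" and Y :: "'a \<Rightarrow> real"
    and Xs :: "nat \<Rightarrow> 'a \<Rightarrow> real^'p" and Ys :: "nat \<Rightarrow> 'a \<Rightarrow> real"
    and f :: "real^'p \<Rightarrow> real"
    and n L r :: nat and C \<sigma> \<Gamma> lam :: real
    and W1 :: "nat \<Rightarrow> 'p \<Rightarrow> real" and W :: "nat \<Rightarrow> nat \<Rightarrow> nat \<Rightarrow> real"
    and v :: "nat \<Rightarrow> nat \<Rightarrow> real"
  assumes M: "prob_space M"
    and XY_rv: "X \<in> borel_measurable M" "Y \<in> borel_measurable M"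
    and iid_indep: "prob_space.indep_vars M (\<lambda>_. borel) (\<lambda>i \<omega>. (Xs i \<omega>, Ys i \<omega>)) {..<n}"
    and iid_dist: "\<And>i. i < n \<Longrightarrow>
         distr M borel (\<lambda>\<omega>. (Xs i \<omega>, Ys i \<omega>)) = distr M borel (\<lambda>\<omega>. (X \<omega>, Y \<omega>))"
    and f_meas: "f \<in> borel_measurable borel"
    and noise_int: "integrable M (\<lambda>\<omega>. Y \<omega> - f (X \<omega>))"
    and noise_mean: "AE \<omega> in M.
         real_cond_exp M (vimage_algebra (space M) X borel) (\<lambda>\<omega>. Y \<omega> - f (X \<omega>)) \<omega> = 0"
    and C_ge: "C \<ge> 1"
    and f_bdd: "\<forall>x. \<bar>f x\<bar> \<le> C"
    and \<sigma>_pos: "\<sigma> > 0" and \<Gamma>_pos: "\<Gamma> > 0"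
    and moments: "\<And>k::nat. k \<ge> 2 \<Longrightarrow> AE \<omega> in M.
         nn_cond_exp M (vimage_algebra (space M) X borel)
           (\<lambda>\<omega>. ennreal (\<bar>Y \<omega> - f (X \<omega>)\<bar> ^ k)) \<omega>
         \<le> ennreal (fact k / 2 * \<sigma>^2 * \<Gamma>^(k - 2))"
    and lam: "0 \<le> lam" "lam < real n / (16 * C * max \<Gamma> (2 * C))"
  shows
    "let w = 16 * C * max \<Gamma> (2 * C);
         Cnl = lam / real n * (8 * (C^2 + \<sigma>^2) / (1 - w * lam / real n));
         ft = clipped_net C L r W1 W v;
         E = risk M X Y ft - risk M X Y f;
         En = (\<lambda>\<omega>. emp_risk n Xs Ys ft \<omega> - emp_risk n Xs Ys f \<omega>)
     in max (\<integral>\<^sup>+ \<omega>. ennreal (exp (lam * (E - En \<omega>))) \<partial>M)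
            (\<integral>\<^sup>+ \<omega>. ennreal (exp (lam * (En \<omega> - E))) \<partial>M)
        \<le> ennreal (exp (Cnl * lam * E))"
proof -
  interpret bernstein_regression M X Y f C \<sigma> \<Gamma>
    using XY_rv f_meas f_bdd \<Gamma>_pos noise_int noise_mean moments
    by (intro bernstein_regression.intro[OF M] bernstein_regression_axioms.intro) auto
  define ft where "ft = clipped_net C L r W1 W v"
  have ft_measurable: "ft \<in> borel_measurable borel"
    unfolding ft_def by (rule clipped_net_measurable)
  have ft_le: "\<bar>ft x\<bar> \<le> C" for x
    unfolding ft_def using C_ge by (intro abs_clipped_net_le) simp
  have "0 < 16 * C * max \<Gamma> (2 * C)"
    using C_ge \<Gamma>_pos by simp
  then have "\<bar>t\<bar> * (16 * C * max \<Gamma> (2 * C)) < real n" if "\<bar>t\<bar> = lam" for t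
    using lam that by (simp add: field_simps)
  note mgf = emp_excess_risk_mgf_le[OF iid_indep iid_dist ft_measurable ft_le this]
  show ?thesis
    using mgf[of lam] mgf[of "- lam"] lam(1)
    unfolding Let_def ft_def[symmetric]
    by (simp add: algebra_simps)
qed

end
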